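(* Let $p\ge n$, $\alpha>0$, $q<\frac{\alpha}{n+\alpha}$ and let $f$ be a positive function on $S^{n-1}$. If $h_1,h_2$ are positive $C^2$ solutions on $S^{n-1}$ of $h^{1-p}g_{\alpha,q}(Dh)\det(h_{ij}+h\delta_{ij})=f$, then $h_1=h_2$.
   Context: $g_{\alpha,q}(x)=\frac{1}{Z(\alpha,q)}[1-\frac{q}{\alpha}|x|^\alpha]_+^{\frac1q-\frac n\alpha-1}$ ($q\ne0$), $\frac{1}{Z(\alpha,q)}e^{-|x|^\alpha/\alpha}$ ($q=0$), $Z(\alpha,q)$ normalizing $\int g_{\alpha,q}=1$. $h_{ij}$: covariant Hessian on $S^{n-1}$ in an orthonormal frame; $Dh$: Euclidean gradient of the 1-homogeneous extension of $h$, $|Dh|^2=h^2+|\nabla h|^2$. *)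

theory Defs
  imports "HOL-Analysis.Analysis"
begin

definition hom_ext :: "(real^'n \<Rightarrow> real) \<Rightarrow> real^'n \<Rightarrow> real" where
  "hom_ext h x = norm x * h (x /\<^sub>R norm x)"

definition C2_on :: "(real^'n) set \<Rightarrow> (real^'n \<Rightarrow> real) \<Rightarrow> bool" where
  "C2_on S F \<longleftrightarrow> (\<exists>G :: real^'n \<Rightarrow> real^'n. \<exists>Hs :: real^'n \<Rightarrow> real^'n^'n.
     (\<forall>x\<in>S. (F has_derivative (\<lambda>v. G x \<bullet> v)) (at x)) \<and>
     (\<forall>x\<in>S. (G has_derivative (\<lambda>v. Hs x *v v)) (at x)) \<and>
     continuous_on S Hs)"

definition grad :: "(real^'n \<Rightarrow> real) \<Rightarrow> real^'n \<Rightarrow> real^'n" where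
  "grad F x = (THE g. (F has_derivative (\<lambda>v. g \<bullet> v)) (at x))"

definition sph_exp :: "real^'n \<Rightarrow> real^'n \<Rightarrow> real^'n" where
  "sph_exp x v = (if v = 0 then x else cos (norm v) *\<^sub>R x + (sin (norm v) / norm v) *\<^sub>R v)"

text \<open>Covariant Hessian of h on the sphere at x: the quadratic form is the second derivative
  along geodesics, the bilinear form is obtained by polarization.\<close>
definition cov_quad :: "(real^'n \<Rightarrow> real) \<Rightarrow> real^'n \<Rightarrow> real^'n \<Rightarrow> real" where
  "cov_quad h x v = deriv (\<lambda>s. deriv (\<lambda>t. h (sph_exp x (t *\<^sub>R v))) s) 0"

definition cov_hess :: "(real^'n \<Rightarrow> real) \<Rightarrow> real^'n \<Rightarrow> real^'n \<Rightarrow> real^'n \<Rightarrow> real" where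
  "cov_hess h x u w = (cov_quad h x (u + w) - cov_quad h x (u - w)) / 4"

definition ortho_frame :: "real^'n \<Rightarrow> (nat \<Rightarrow> real^'n) \<Rightarrow> bool" where
  "ortho_frame x e \<longleftrightarrow> (\<forall>i<CARD('n) - 1. e i \<bullet> x = 0) \<and>
     (\<forall>i<CARD('n) - 1. \<forall>j<CARD('n) - 1. e i \<bullet> e j = (if i = j then 1 else 0))"

definition det_nat :: "nat \<Rightarrow> (nat \<Rightarrow> nat \<Rightarrow> real) \<Rightarrow> real" where
  "det_nat m A = (\<Sum>\<sigma> | \<sigma> permutes {..<m}. of_int (sign \<sigma>) * (\<Prod>i<m. A i (\<sigma> i)))"

definition frame_det :: "(real^'n \<Rightarrow> real) \<Rightarrow> real^'n \<Rightarrow> (nat \<Rightarrow> real^'n) \<Rightarrow> real" where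
  "frame_det h x e = det_nat (CARD('n) - 1)
     (\<lambda>i j. cov_hess h x (e i) (e j) + h x * (if i = j then 1 else 0))"

definition g_unnorm :: "real \<Rightarrow> real \<Rightarrow> real^'n \<Rightarrow> real" where
  "g_unnorm \<alpha> q y = (if q = 0 then exp (- (norm y powr \<alpha>) / \<alpha>)
     else max 0 (1 - q / \<alpha> * norm y powr \<alpha>) powr (1 / q - real CARD('n) / \<alpha> - 1))"

definition g_aq :: "real \<Rightarrow> real \<Rightarrow> real^'n \<Rightarrow> real" where
  "g_aq \<alpha> q y = g_unnorm \<alpha> q y / (\<integral>z. g_unnorm \<alpha> q (z :: real^'n) \<partial>lborel)"

definition pos_C2_solution :: "real \<Rightarrow> real \<Rightarrow> real \<Rightarrow> (real^'n \<Rightarrow> real) \<Rightarrow> (real^'n \<Rightarrow> real) \<Rightarrow> bool" where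
  "pos_C2_solution p \<alpha> q f h \<longleftrightarrow>
     (\<forall>x\<in>sphere 0 1. h x > 0) \<and> C2_on (- {0}) (hom_ext h) \<and>
     (\<forall>x\<in>sphere 0 1. \<forall>e. ortho_frame x e \<longrightarrow>
        h x powr (1 - p) * g_aq \<alpha> q (grad (hom_ext h) x) * frame_det h x e = f x)"

end

theory Submission
  imports Defs "Jordan_Normal_Form.Determinant"
begin

text \<open>Let \<open>l\<close> be the maximum of \<open>h\<^sub>1/h\<^sub>2\<close> on the sphere, attained at \<open>x\<^sub>0\<close>, and suppose
  \<open>l > 1\<close>. The function \<open>h\<^sub>1 - l h\<^sub>2\<close> is maximal at \<open>x\<^sub>0\<close>, so there the gradients of the
  1-homogeneous extensions satisfy \<open>Dh\<^sub>1 = l Dh\<^sub>2\<close> and the tangential Hessians satisfy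
  \<open>D\<^sup>2h\<^sub>1 \<le> l D\<^sup>2h\<^sub>2\<close>. In an orthonormal frame \<open>h\<^sub>i\<^sub>j + h \<delta>\<^sub>i\<^sub>j\<close> is exactly the tangential
  block of \<open>D\<^sup>2h\<close>, and it is positive definite for every solution: it is so at a minimum of
  \<open>h\<close>, and by connectedness of the sphere it stays so, since \<open>f > 0\<close> forbids a vanishing
  determinant. Monotonicity of the determinant on positive definite forms then turns the two
  equations at \<open>x\<^sub>0\<close> into \<open>g(Dh\<^sub>2) \<le> l\<^sup>n\<^sup>-\<^sup>p g(Dh\<^sub>1) \<le> g(Dh\<^sub>1)\<close>, using \<open>p \<ge> n\<close>. But
  \<open>\<bar>Dh\<^sub>1\<bar> = l \<bar>Dh\<^sub>2\<bar> > \<bar>Dh\<^sub>2\<bar>\<close>, and for \<open>q < \<alpha>/(n+\<alpha>)\<close> the density \<open>g\<^sub>\<alpha>\<^sub>,\<^sub>q\<close> is strictly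
  decreasing in \<open>\<bar>y\<bar>\<close> where it is positive: a contradiction. Hence \<open>h\<^sub>1 \<le> h\<^sub>2\<close>, and by
  symmetry \<open>h\<^sub>1 = h\<^sub>2\<close>.\<close>

no_notation Matrix.scalar_prod (infix "\<bullet>" 70)
no_notation Matrix.vec_index (infixl "$" 100)

section \<open>Determinants and Schur complements\<close>

lemma det_nat_eq_det: "det_nat m A = Determinant.det (mat m m (\<lambda>(i, j). A i j))"
  unfolding det_nat_def Determinant.det_def by (simp add: atLeast0LessThan)

lemma det_nat_cong: "(\<And>i j. i < m \<Longrightarrow> j < m \<Longrightarrow> A i j = B i j) \<Longrightarrow> det_nat m A = det_nat m B"
  unfolding det_nat_def
  by (intro sum.cong refl arg_cong[where f = "\<lambda>x. _ * x"] prod.cong)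
     (metis lessThan_iff mem_Collect_eq permutes_in_image)

lemma det_nat_cmult: "det_nat m (\<lambda>i j. c * A i j) = c ^ m * det_nat m A"
  unfolding det_nat_def sum_distrib_left by (auto intro!: sum.cong simp: prod.distrib)

lemma det_nat_zero_column:
  assumes "k < m" and "\<And>i. i < m \<Longrightarrow> A i k = 0"
  shows "det_nat m A = 0"
  unfolding det_nat_def
proof (rule sum.neutral, intro ballI)
  fix \<sigma> assume "\<sigma> \<in> {\<sigma>. \<sigma> permutes {..<m}}"
  then have \<sigma>: "\<sigma> permutes {..<m}" by simp
  define i where "i = inv_into UNIV \<sigma> k"
  have "\<sigma> i = k" "i < m"
    using \<sigma> assms(1) permutes_in_image[OF permutes_inv[OF \<sigma>]]
    by (auto simp: i_def permutes_inverses(1))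
  then have "(\<Prod>i<m. A i (\<sigma> i)) = 0" using assms(2) by (intro prod_zero) auto
  then show "of_int (sign \<sigma>) * (\<Prod>i<m. A i (\<sigma> i)) = 0" by simp
qed

lemma det_nat_Schur:
  fixes A :: "nat \<Rightarrow> nat \<Rightarrow> real"
  assumes pivot: "A 0 0 \<noteq> 0"
  shows "det_nat (Suc m) A =
    A 0 0 * det_nat m (\<lambda>i j. A (Suc i) (Suc j) - A (Suc i) 0 * A 0 (Suc j) / A 0 0)"
proof -
  define M where "M = mat (Suc m) (Suc m) (\<lambda>(i, j). A i j)"
  define E :: "real mat" where "E = mat (Suc m) (Suc m)
    (\<lambda>(i, j). if i = j then 1 else if j = 0 then - A i 0 / A 0 0 else 0)"
  define M' where "M' = mat (Suc m) (Suc m)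
    (\<lambda>(i, j). if i = 0 then A 0 j else A i j - A i 0 * A 0 j / A 0 0)"
  have "E * M = M'"
  proof (rule eq_matI)
    fix i j assume "i < dim_row M'" and "j < dim_col M'"
    then have i: "i < Suc m" and j: "j < Suc m" by (auto simp: M'_def)
    have "(E * M) $$ (i, j) = (\<Sum>k<Suc m. E $$ (i, k) * M $$ (k, j))"
      using i j by (simp add: E_def M_def scalar_prod_def atLeast0LessThan)
    also have "\<dots> = (\<Sum>k<Suc m. (if k = i then A i j else 0)
        + (if k = 0 \<and> i \<noteq> 0 then - A i 0 / A 0 0 * A 0 j else 0))"
      using i j by (intro sum.cong) (auto simp: E_def M_def)
    also have "\<dots> = M' $$ (i, j)"
      using i j by (simp add: sum.distrib M'_def)
    finally show "(E * M) $$ (i, j) = M' $$ (i, j)" .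
  qed (auto simp: E_def M_def M'_def)
  moreover have "Determinant.det E = 1"
  proof -
    have "Determinant.det E = prod_list (diag_mat E)"
      by (rule det_lower_triangular[of "Suc m"]) (auto simp: E_def)
    also have "diag_mat E = map (\<lambda>_. 1) [0..<Suc m]"
      by (auto simp: diag_mat_def E_def)
    finally show ?thesis by (simp add: map_replicate_const)
  qed
  ultimately have "det_nat (Suc m) A = Determinant.det M'"
    using det_mult[of E "Suc m" M] by (simp add: det_nat_eq_det E_def M_def)
  also have "\<dots> = (\<Sum>i<Suc m. M' $$ (i, 0) * cofactor M' i 0)"
    by (rule laplace_expansion_column) (auto simp: M'_def)
  also have "\<dots> = M' $$ (0, 0) * cofactor M' 0 0"
    using pivot by (subst sum.lessThan_Suc_shift) (simp add: M'_def)
  also have "cofactor M' 0 0 =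
      det_nat m (\<lambda>i j. A (Suc i) (Suc j) - A (Suc i) 0 * A 0 (Suc j) / A 0 0)"
    unfolding cofactor_def det_nat_eq_det
    by (auto intro!: arg_cong[where f = Determinant.det] simp: mat_delete_def M'_def insert_index_def)
  finally show ?thesis by (simp add: M'_def)
qed

definition quad_form :: "nat \<Rightarrow> (nat \<Rightarrow> nat \<Rightarrow> real) \<Rightarrow> (nat \<Rightarrow> real) \<Rightarrow> real" where
  "quad_form m A c = (\<Sum>i<m. \<Sum>j<m. c i * A i j * c j)"

lemma quad_form_unit_vector:
  assumes "k < m"
  shows "quad_form m A (\<lambda>i. if i = k then 1 else 0) = A k k"
proof -
  have "(\<Sum>j<m. (if i = k then 1 else 0) * A i j * (if j = k then 1 else 0))
      = (\<Sum>j<m. if j = k then (if i = k then A i k else 0) else 0)" for i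
    by (intro sum.cong) auto
  then show ?thesis using assms by (simp add: quad_form_def sum.delta')
qed

lemma quad_form_Schur:
  fixes A :: "nat \<Rightarrow> nat \<Rightarrow> real"
  assumes sym: "\<And>i j. i < Suc m \<Longrightarrow> j < Suc m \<Longrightarrow> A i j = A j i" and pivot: "A 0 0 \<noteq> 0"
  shows "quad_form (Suc m) A c = A 0 0 * (c 0 + (\<Sum>j<m. A 0 (Suc j) * c (Suc j)) / A 0 0)\<^sup>2
     + quad_form m (\<lambda>i j. A (Suc i) (Suc j) - A (Suc i) 0 * A 0 (Suc j) / A 0 0) (\<lambda>i. c (Suc i))"
proof -
  define \<beta> where "\<beta> = (\<Sum>j<m. A 0 (Suc j) * c (Suc j))"
  have row: "(\<Sum>j<m. c 0 * A 0 (Suc j) * c (Suc j)) = c 0 * \<beta>"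
    unfolding \<beta>_def sum_distrib_left by (auto intro!: sum.cong)
  have column: "(\<Sum>i<m. c (Suc i) * A (Suc i) 0 * c 0) = c 0 * \<beta>"
    unfolding \<beta>_def sum_distrib_left using sym by (auto intro!: sum.cong)
  have rank_one: "quad_form m (\<lambda>i j. A (Suc i) 0 * A 0 (Suc j) / A 0 0) (\<lambda>i. c (Suc i)) = \<beta>\<^sup>2 / A 0 0"
  proof -
    have "quad_form m (\<lambda>i j. A (Suc i) 0 * A 0 (Suc j) / A 0 0) (\<lambda>i. c (Suc i))
       = (\<Sum>i<m. \<Sum>j<m. (A 0 (Suc i) * c (Suc i)) * (A 0 (Suc j) * c (Suc j)) / A 0 0)"
      unfolding quad_form_def using sym by (auto intro!: sum.cong)
    also have "\<dots> = \<beta> * \<beta> / A 0 0"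
      unfolding \<beta>_def sum_product sum_divide_distrib by simp
    finally show ?thesis by (simp add: power2_eq_square)
  qed
  have "quad_form (Suc m) A c = c 0 * A 0 0 * c 0 + (\<Sum>j<m. c 0 * A 0 (Suc j) * c (Suc j))
     + (\<Sum>i<m. c (Suc i) * A (Suc i) 0 * c 0) + quad_form m (\<lambda>i j. A (Suc i) (Suc j)) (\<lambda>i. c (Suc i))"
    unfolding quad_form_def sum.lessThan_Suc_shift sum.distrib by simp
  also have "quad_form m (\<lambda>i j. A (Suc i) (Suc j)) (\<lambda>i. c (Suc i)) =
     quad_form m (\<lambda>i j. A (Suc i) (Suc j) - A (Suc i) 0 * A 0 (Suc j) / A 0 0) (\<lambda>i. c (Suc i))
     + quad_form m (\<lambda>i j. A (Suc i) 0 * A 0 (Suc j) / A 0 0) (\<lambda>i. c (Suc i))"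
    unfolding quad_form_def by (simp add: sum.distrib[symmetric] algebra_simps)
  also have "A 0 0 * (c 0 + \<beta> / A 0 0)\<^sup>2 = c 0 * A 0 0 * c 0 + 2 * (c 0 * \<beta>) + \<beta>\<^sup>2 / A 0 0"
    using pivot by (simp add: power2_eq_square field_simps)
  ultimately show ?thesis unfolding row column rank_one \<beta>_def[symmetric] by linarith
qed

text \<open>Induction on the size via the Schur complement: the complements inherit positivity and
  the order, because completing the square in the first variable realises the complement's form
  as a minimum of the full form.\<close>
lemma det_nat_mono_pos_def:
  fixes A B :: "nat \<Rightarrow> nat \<Rightarrow> real"
  assumes "\<And>i j. i < m \<Longrightarrow> j < m \<Longrightarrow> A i j = A j i"
    and "\<And>i j. i < m \<Longrightarrow> j < m \<Longrightarrow> B i j = B j i"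
    and "\<And>c. \<exists>i<m. c i \<noteq> 0 \<Longrightarrow> 0 < quad_form m A c"
    and "\<And>c. quad_form m A c \<le> quad_form m B c"
  shows "0 < det_nat m A \<and> det_nat m A \<le> det_nat m B"
  using assms
proof (induction m arbitrary: A B)
  case 0
  then show ?case by (simp add: det_nat_def)
next
  case (Suc m)
  define a where "a = A 0 0"
  define b where "b = B 0 0"
  have a: "a > 0" and ab: "a \<le> b"
    using Suc.prems(3)[of "\<lambda>i. if i = 0 then 1 else 0"] Suc.prems(4)[of "\<lambda>i. if i = 0 then 1 else 0"]
    by (auto simp: quad_form_unit_vector a_def b_def)
  then have b: "b > 0" by simp
  define SA where "SA = (\<lambda>i j. A (Suc i) (Suc j) - A (Suc i) 0 * A 0 (Suc j) / a)"
  define SB where "SB = (\<lambda>i j. B (Suc i) (Suc j) - B (Suc i) 0 * B 0 (Suc j) / b)"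
  have qA: "quad_form (Suc m) A c
      = a * (c 0 + (\<Sum>j<m. A 0 (Suc j) * c (Suc j)) / a)\<^sup>2 + quad_form m SA (\<lambda>i. c (Suc i))" for c
    unfolding a_def SA_def using Suc.prems(1) a by (intro quad_form_Schur) (auto simp: a_def)
  have qB: "quad_form (Suc m) B c
      = b * (c 0 + (\<Sum>j<m. B 0 (Suc j) * c (Suc j)) / b)\<^sup>2 + quad_form m SB (\<lambda>i. c (Suc i))" for c
    unfolding b_def SB_def using Suc.prems(2) b by (intro quad_form_Schur) (auto simp: b_def)
  have "0 < quad_form m SA y" if "\<exists>i<m. y i \<noteq> 0" for y
  proof -
    define c where "c i = (if i = 0 then - (\<Sum>j<m. A 0 (Suc j) * y j) / a else y (i - 1))" for i
    have "\<exists>i<Suc m. c i \<noteq> 0" using that by (auto simp: c_def)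
    then have "0 < quad_form (Suc m) A c" using Suc.prems(3) by blast
    also have "\<dots> = quad_form m SA y" unfolding qA using a by (simp add: c_def)
    finally show ?thesis .
  qed
  moreover have "quad_form m SA y \<le> quad_form m SB y" for y
  proof -
    define c where "c i = (if i = 0 then - (\<Sum>j<m. B 0 (Suc j) * y j) / b else y (i - 1))" for i
    have "quad_form m SA y \<le> quad_form (Suc m) A c" unfolding qA using a by (simp add: c_def)
    also have "\<dots> \<le> quad_form (Suc m) B c" using Suc.prems(4) by blast
    also have "\<dots> = quad_form m SB y" unfolding qB using b by (simp add: c_def)
    finally show ?thesis .
  qed
  moreover have "SA i j = SA j i" "SB i j = SB j i" if "i < m" "j < m" for i j
    using Suc.prems(1,2) that by (auto simp: SA_def SB_def)
  ultimately have "0 < det_nat m SA" "det_nat m SA \<le> det_nat m SB"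
    using Suc.IH[of SA SB] by blast+
  moreover have "det_nat (Suc m) A = a * det_nat m SA" "det_nat (Suc m) B = b * det_nat m SB"
    unfolding a_def b_def SA_def SB_def using a b by (auto intro: det_nat_Schur simp: a_def b_def)
  ultimately show ?case using a ab by (auto intro: mult_mono)
qed

section \<open>Orthonormal tangent frames\<close>

lemma orthonormal_basis_orthogonal_complement:
  fixes F :: "'a::euclidean_space set"
  assumes "finite F" and "pairwise Linear_Algebra.orthogonal F" and "\<And>z. z \<in> F \<Longrightarrow> norm z = 1"
  obtains B where "B \<subseteq> {y. \<forall>z\<in>F. z \<bullet> y = 0}" "pairwise Linear_Algebra.orthogonal B" "\<And>b. b \<in> B \<Longrightarrow> norm b = 1"
    "finite B" "card B + card F = DIM('a)"
proof -
  define T where "T = {y. \<forall>z \<in> span F. Linear_Algebra.orthogonal z y}"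
  have "dim T + dim (span F) = DIM('a)"
    unfolding T_def using dim_subspace_orthogonal_to_vectors[of "span F" UNIV] by auto
  moreover have "independent F"
    using assms(2) assms(3)[of 0] by (intro pairwise_orthogonal_independent) auto
  then have "dim (span F) = card F" by (rule dim_span_eq_card_independent)
  ultimately have dim_T: "dim T + card F = DIM('a)" by simp
  have "subspace T" unfolding T_def using subspace_orthogonal_to_vectors[of "span F"] by simp
  then obtain B where B: "B \<subseteq> T" "pairwise Linear_Algebra.orthogonal B" "\<And>x. x \<in> B \<Longrightarrow> norm x = 1"
     "independent B" "card B = dim T"
    by (metis orthonormal_basis_subspace)
  moreover have "B \<subseteq> {y. \<forall>z\<in>F. z \<bullet> y = 0}"
    using B(1) unfolding T_def Linear_Algebra.orthogonal_def by (auto intro: span_base)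
  ultimately show ?thesis using that[of B] independent_imp_finite[OF B(4)] dim_T by auto
qed

lemma orthonormal_enumeration:
  fixes B :: "'a::real_inner set"
  assumes "finite B" and "pairwise Linear_Algebra.orthogonal B" and "\<And>b. b \<in> B \<Longrightarrow> norm b = 1"
  obtains \<phi> where "bij_betw \<phi> {..<card B} B"
    "\<And>i j. i < card B \<Longrightarrow> j < card B \<Longrightarrow> \<phi> i \<bullet> \<phi> j = (if i = j then 1 else 0)"
proof -
  obtain \<phi> where \<phi>: "bij_betw \<phi> {..<card B} B"
    using ex_bij_betw_nat_finite[OF assms(1)] by (auto simp: atLeast0LessThan)
  then have "\<phi> i \<in> B" if "i < card B" for i using that by (auto simp: bij_betw_def)
  moreover have "\<phi> i \<noteq> \<phi> j" if "i < card B" "j < card B" "i \<noteq> j" for i j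
    using \<phi> that by (auto simp: bij_betw_def inj_on_def)
  ultimately have "\<phi> i \<bullet> \<phi> j = (if i = j then 1 else 0)" if "i < card B" "j < card B" for i j
    using assms(2,3) that unfolding pairwise_def Linear_Algebra.orthogonal_def by (auto simp: dot_square_norm)
  then show ?thesis using that \<phi> by blast
qed

lemma ortho_frame_exists:
  fixes x :: "real^'n"
  assumes "norm x = 1"
  obtains e where "ortho_frame x e"
proof -
  obtain B where B: "B \<subseteq> {y. x \<bullet> y = 0}" "pairwise Linear_Algebra.orthogonal B" "\<And>b. b \<in> B \<Longrightarrow> norm b = 1"
    "finite B" "card B + 1 = CARD('n)"
    using orthonormal_basis_orthogonal_complement[of "{x}"] assms by auto
  obtain \<phi> where \<phi>: "bij_betw \<phi> {..<card B} B"
    "\<And>i j. i < card B \<Longrightarrow> j < card B \<Longrightarrow> \<phi> i \<bullet> \<phi> j = (if i = j then 1 else 0)"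
    using orthonormal_enumeration[OF B(4,2,3)] by blast
  have "\<phi> i \<bullet> x = 0" if "i < card B" for i
    using bij_betwE[OF \<phi>(1)] B(1) that by (force simp: inner_commute)
  then have "ortho_frame x \<phi>"
    using \<phi>(2) B(5) unfolding ortho_frame_def by (metis add_diff_cancel_right')
  then show ?thesis by (rule that)
qed

lemma ortho_frame_exists_first:
  fixes x w :: "real^'n"
  assumes "norm x = 1" and "norm w = 1" and "w \<bullet> x = 0"
  obtains e where "ortho_frame x e" "e 0 = w" "0 < CARD('n) - 1"
proof -
  have "x \<noteq> w" using assms by (metis inner_eq_zero_iff norm_zero zero_neq_one)
  then have "pairwise Linear_Algebra.orthogonal {x, w}" using assms(3)
    unfolding pairwise_def Linear_Algebra.orthogonal_def by (auto simp: inner_commute)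
  then obtain B where B: "B \<subseteq> {y. x \<bullet> y = 0 \<and> w \<bullet> y = 0}" "pairwise Linear_Algebra.orthogonal B"
    "\<And>b. b \<in> B \<Longrightarrow> norm b = 1" "finite B" "card B + 2 = CARD('n)"
    using orthonormal_basis_orthogonal_complement[of "{x, w}"] assms \<open>x \<noteq> w\<close> by auto
  obtain \<phi> where \<phi>: "bij_betw \<phi> {..<card B} B"
    "\<And>i j. i < card B \<Longrightarrow> j < card B \<Longrightarrow> \<phi> i \<bullet> \<phi> j = (if i = j then 1 else 0)"
    using orthonormal_enumeration[OF B(4,2,3)] by blast
  have \<phi>_perp: "\<phi> i \<bullet> x = 0" "\<phi> i \<bullet> w = 0" if "i < card B" for i
    using bij_betwE[OF \<phi>(1)] B(1) that by (force simp: inner_commute)+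
  define e where "e i = (if i = 0 then w else \<phi> (i - 1))" for i
  have "e i \<bullet> e j = (if i = j then 1 else 0)" if "i < CARD('n) - 1" "j < CARD('n) - 1" for i j
    using that assms(2) \<phi>(2)[of "i - 1" "j - 1"] \<phi>_perp[of "i - 1"] \<phi>_perp[of "j - 1"] B(5)
    by (auto simp: e_def dot_square_norm inner_commute)
  moreover have "e i \<bullet> x = 0" if "i < CARD('n) - 1" for i
    using that \<phi>_perp(1)[of "i - 1"] assms(3) B(5) by (auto simp: e_def)
  ultimately show ?thesis using that[of e] B(5) unfolding ortho_frame_def by (auto simp: e_def)
qed

definition frame_matrix :: "real^'n^'n \<Rightarrow> (nat \<Rightarrow> real^'n) \<Rightarrow> nat \<Rightarrow> nat \<Rightarrow> real" where
  "frame_matrix M e i j = (e i \<bullet> (M *v e j) + e j \<bullet> (M *v e i)) / 2"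

lemma frame_matrix_commute: "frame_matrix M e i j = frame_matrix M e j i"
  by (simp add: frame_matrix_def add.commute)

lemma frame_matrix_scaleR: "frame_matrix (l *\<^sub>R M) e = (\<lambda>i j. l * frame_matrix M e i j)"
  unfolding frame_matrix_def scaleR_matrix_vector_assoc[symmetric] by (simp add: fun_eq_iff field_simps)

lemma quad_form_frame_matrix:
  "quad_form m (frame_matrix M e) c = (\<Sum>i<m. c i *\<^sub>R e i) \<bullet> (M *v (\<Sum>i<m. c i *\<^sub>R e i))"
proof -
  have linear: "M *v (\<Sum>i<m. c i *\<^sub>R e i) = (\<Sum>j<m. c j *\<^sub>R (M *v e j))"
    by (simp add: linear_sum[OF matrix_vector_mul_linear] matrix_vector_mult_scaleR)
  have lhs: "(\<Sum>i<m. c i *\<^sub>R e i) \<bullet> (M *v (\<Sum>i<m. c i *\<^sub>R e i))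
      = (\<Sum>i<m. \<Sum>j<m. c i * (e i \<bullet> (M *v e j)) * c j)"
    unfolding linear inner_sum_left inner_sum_right by (subst sum.swap) (simp add: mult_ac)
  have "(\<Sum>i<m. \<Sum>j<m. c i * (e j \<bullet> (M *v e i)) * c j)
      = (\<Sum>j<m. \<Sum>i<m. c i * (e j \<bullet> (M *v e i)) * c j)"
    by (rule sum.swap)
  also have "\<dots> = (\<Sum>i<m. \<Sum>j<m. c i * (e i \<bullet> (M *v e j)) * c j)"
    by (simp add: mult_ac)
  finally have swapped: "(\<Sum>i<m. \<Sum>j<m. c i * (e j \<bullet> (M *v e i)) * c j)
      = (\<Sum>i<m. \<Sum>j<m. c i * (e i \<bullet> (M *v e j)) * c j)" .
  have "quad_form m (frame_matrix M e) c = ((\<Sum>i<m. \<Sum>j<m. c i * (e i \<bullet> (M *v e j)) * c j)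
      + (\<Sum>i<m. \<Sum>j<m. c i * (e j \<bullet> (M *v e i)) * c j)) / 2"
    unfolding quad_form_def frame_matrix_def
    by (simp add: sum.distrib[symmetric] sum_divide_distrib algebra_simps add_divide_distrib)
  then show ?thesis unfolding swapped lhs by simp
qed

lemma ortho_frame_combination:
  fixes x :: "real^'n"
  assumes "ortho_frame x e"
  shows "(\<Sum>i<CARD('n) - 1. c i *\<^sub>R e i) \<bullet> x = 0"
    and "k < CARD('n) - 1 \<Longrightarrow> (\<Sum>i<CARD('n) - 1. c i *\<^sub>R e i) \<bullet> e k = c k"
proof -
  show "(\<Sum>i<CARD('n) - 1. c i *\<^sub>R e i) \<bullet> x = 0"
    using assms unfolding inner_sum_left ortho_frame_def by simp
  assume "k < CARD('n) - 1"
  then have "(\<Sum>i<CARD('n) - 1. c i *\<^sub>R e i) \<bullet> e k = (\<Sum>i<CARD('n) - 1. if i = k then c k else 0)"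
    using assms unfolding inner_sum_left ortho_frame_def by (intro sum.cong) auto
  then show "(\<Sum>i<CARD('n) - 1. c i *\<^sub>R e i) \<bullet> e k = c k"
    using \<open>k < CARD('n) - 1\<close> by simp
qed

section \<open>Second derivatives along great circles\<close>

text \<open>Differentiability everywhere, not only at \<open>0\<close>, is what the second order condition at a
  maximum needs (via the mean value theorem).\<close>
definition has_deriv2_at_0 :: "(real \<Rightarrow> real) \<Rightarrow> real \<Rightarrow> real \<Rightarrow> bool" where
  "has_deriv2_at_0 \<phi> D1 D2 \<longleftrightarrow> (\<exists>d. (\<forall>s. (\<phi> has_real_derivative d s) (at s)) \<and> d 0 = D1 \<and>
     (d has_real_derivative D2) (at 0))"

lemma has_deriv2_at_0_diff_cmult:
  assumes "has_deriv2_at_0 \<phi> a b" and "has_deriv2_at_0 \<psi> c d"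
  shows "has_deriv2_at_0 (\<lambda>t. \<phi> t - l * \<psi> t) (a - l * c) (b - l * d)"
proof -
  obtain d1 d2 where "\<And>s. (\<phi> has_real_derivative d1 s) (at s)" "d1 0 = a" "(d1 has_real_derivative b) (at 0)"
    "\<And>s. (\<psi> has_real_derivative d2 s) (at s)" "d2 0 = c" "(d2 has_real_derivative d) (at 0)"
    using assms unfolding has_deriv2_at_0_def by blast
  then show ?thesis unfolding has_deriv2_at_0_def
    by (intro exI[of _ "\<lambda>s. d1 s - l * d2 s"]) (auto intro!: derivative_eq_intros)
qed

lemma has_deriv2_at_0_deriv2:
  assumes "has_deriv2_at_0 \<phi> D1 D2"
  shows "deriv (\<lambda>s. deriv \<phi> s) 0 = D2"
proof -
  obtain d where "\<And>s. (\<phi> has_real_derivative d s) (at s)" "(d has_real_derivative D2) (at 0)"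
    using assms unfolding has_deriv2_at_0_def by blast
  moreover from this(1) have "(\<lambda>s. deriv \<phi> s) = d" by (auto intro: DERIV_imp_deriv)
  ultimately show ?thesis by (auto intro: DERIV_imp_deriv)
qed

lemma has_deriv2_at_0_max:
  assumes "has_deriv2_at_0 \<phi> D1 D2" and max: "\<And>t. \<phi> t \<le> \<phi> 0"
  shows "D1 = 0 \<and> D2 \<le> 0"
proof -
  obtain d where der: "\<And>s. (\<phi> has_real_derivative d s) (at s)" and "d 0 = D1"
    and dd: "(d has_real_derivative D2) (at 0)"
    using assms(1) unfolding has_deriv2_at_0_def by blast
  have d0: "d 0 = 0"
    by (rule DERIV_local_max[OF der[of 0], of 1]) (use max in auto)
  have "\<not> D2 > 0"
  proof
    assume "D2 > 0"
    from DERIV_pos_inc_right[OF dd this]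
    obtain \<delta> where "\<delta> > 0" and inc: "\<And>h. 0 < h \<Longrightarrow> h < \<delta> \<Longrightarrow> d 0 < d h"
      by auto
    define t where "t = \<delta> / 2"
    have t: "0 < t" "t < \<delta>" using \<open>\<delta> > 0\<close> by (auto simp: t_def)
    obtain z where "0 < z" "z < t" "\<phi> t - \<phi> 0 = t * d z"
      using MVT2[OF t(1), of \<phi> d] der by auto
    moreover have "d z > 0" using inc[of z] \<open>0 < z\<close> \<open>z < t\<close> t d0 by simp
    ultimately have "\<phi> t > \<phi> 0" using t by (simp add: algebra_simps)
    then show False using max[of t] by simp
  qed
  then show ?thesis using d0 \<open>d 0 = D1\<close> by simp
qed

lemma has_deriv2_at_0_min:
  assumes "has_deriv2_at_0 \<phi> D1 D2" and "\<And>t. \<phi> 0 \<le> \<phi> t"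
  shows "D1 = 0 \<and> 0 \<le> D2"
proof -
  obtain d where "\<And>s. (\<phi> has_real_derivative d s) (at s)" "d 0 = D1" "(d has_real_derivative D2) (at 0)"
    using assms(1) unfolding has_deriv2_at_0_def by blast
  then have "has_deriv2_at_0 (\<lambda>t. - \<phi> t) (- D1) (- D2)"
    unfolding has_deriv2_at_0_def by (intro exI[of _ "\<lambda>s. - d s"]) (auto intro!: derivative_eq_intros)
  from has_deriv2_at_0_max[OF this] show ?thesis using assms(2) by auto
qed

lemma hom_ext_sphere: "norm x = 1 \<Longrightarrow> hom_ext h x = h x"
  by (simp add: hom_ext_def)

lemma hom_ext_scaleR:
  assumes "s > 0"
  shows "hom_ext h (s *\<^sub>R y) = s * hom_ext h y"
proof (cases "y = 0")
  case False
  then have direction: "(s *\<^sub>R y) /\<^sub>R norm (s *\<^sub>R y) = y /\<^sub>R norm y" using assms by simp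
  show ?thesis unfolding hom_ext_def direction using assms by simp
qed (simp add: hom_ext_def)

lemma sph_exp_0 [simp]: "sph_exp x 0 = x"
  by (simp add: sph_exp_def)

lemma sph_exp_scaleR:
  assumes "v \<noteq> 0"
  shows "sph_exp x (t *\<^sub>R v) = cos (t * norm v) *\<^sub>R x + sin (t * norm v) *\<^sub>R (v /\<^sub>R norm v)"
proof (cases "t = 0")
  case False
  have "cos (\<bar>t\<bar> * norm v) = cos (t * norm v)"
    by (cases "t > 0") auto
  moreover have "sin (\<bar>t\<bar> * norm v) / (\<bar>t\<bar> * norm v) * t = sin (t * norm v) / norm v"
    using False assms by (cases "t > 0") (auto simp: field_simps)
  ultimately show ?thesis
    using False assms by (simp add: sph_exp_def divide_inverse mult.commute)
qed (simp add: sph_exp_def)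

lemma norm_sph_exp:
  fixes x v :: "real^'n"
  assumes "norm x = 1" and "v \<bullet> x = 0"
  shows "norm (sph_exp x v) = 1"
proof (cases "v = 0")
  case False
  have "sph_exp x v \<bullet> sph_exp x v = (cos (norm v))\<^sup>2 * (x \<bullet> x) + (sin (norm v) / norm v)\<^sup>2 * (v \<bullet> v)"
    using assms(2) False
    by (simp add: sph_exp_def inner_add_left inner_add_right inner_commute[of x v] power2_eq_square)
  also have "\<dots> = (cos (norm v))\<^sup>2 + (sin (norm v))\<^sup>2"
    using assms(1) False by (simp add: dot_square_norm field_simps)
  finally show ?thesis by (simp add: norm_eq_1)
qed (use assms in \<open>simp add: sph_exp_def\<close>)

lemma has_derivative_scaleR_sum:
  assumes "(f has_real_derivative f') (at t)" and "(g has_real_derivative g') (at t)"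
  shows "((\<lambda>t. f t *\<^sub>R x + g t *\<^sub>R w) has_derivative (\<lambda>u. u *\<^sub>R (f' *\<^sub>R x + g' *\<^sub>R w))) (at t)"
  using has_vector_derivative_add[OF has_vector_derivative_scaleR[OF assms(1) has_vector_derivative_const]
      has_vector_derivative_scaleR[OF assms(2) has_vector_derivative_const]]
  by (simp add: has_vector_derivative_def)

locale hom_C2 =
  fixes h :: "real^'n \<Rightarrow> real" and G :: "real^'n \<Rightarrow> real^'n" and Hs :: "real^'n \<Rightarrow> real^'n^'n"
  assumes has_derivative_hom_ext: "y \<noteq> 0 \<Longrightarrow> (hom_ext h has_derivative (\<lambda>v. G y \<bullet> v)) (at y)"
    and has_derivative_G: "y \<noteq> 0 \<Longrightarrow> (G has_derivative (\<lambda>v. Hs y *v v)) (at y)"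
    and continuous_on_Hs: "continuous_on (- {0}) Hs"

lemma pos_C2_solution_hom_C2:
  assumes "pos_C2_solution p \<alpha> q f h"
  obtains G Hs where "hom_C2 h G Hs"
  using assms unfolding pos_C2_solution_def C2_on_def hom_C2_def by blast

lemma pos_C2_solution_pos: "pos_C2_solution p \<alpha> q f h \<Longrightarrow> x \<in> sphere 0 1 \<Longrightarrow> h x > 0"
  by (simp add: pos_C2_solution_def)

context hom_C2
begin

lemma grad_hom_ext:
  assumes "y \<noteq> 0"
  shows "grad (hom_ext h) y = G y"
  unfolding grad_def
proof (rule the_equality)
  show "(hom_ext h has_derivative (\<bullet>) (G y)) (at y)"
    using has_derivative_hom_ext[OF assms] by simp
next
  fix g assume "(hom_ext h has_derivative (\<bullet>) g) (at y)"
  then have "(\<bullet>) g = (\<bullet>) (G y)"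
    using has_derivative_unique has_derivative_hom_ext[OF assms] by blast
  then have "g \<bullet> (g - G y) = G y \<bullet> (g - G y)" by metis
  then have "(g - G y) \<bullet> (g - G y) = 0" by (simp add: inner_diff_left)
  then show "g = G y" by simp
qed

lemma Euler_identity:
  assumes "y \<noteq> 0"
  shows "G y \<bullet> y = hom_ext h y"
proof -
  have "((\<lambda>s. s *\<^sub>R y) has_derivative (\<lambda>t. t *\<^sub>R y)) (at 1)"
    by (auto intro!: derivative_eq_intros)
  moreover have "(hom_ext h has_derivative (\<lambda>v. G y \<bullet> v)) (at ((\<lambda>s. s *\<^sub>R y) 1))"
    using has_derivative_hom_ext[OF assms] by simp
  ultimately have
    "((\<lambda>s. hom_ext h (s *\<^sub>R y)) has_derivative (\<lambda>t. G y \<bullet> (t *\<^sub>R y))) (at 1)"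
    by (rule has_derivative_compose)
  moreover have "(\<lambda>t. G y \<bullet> (t *\<^sub>R y)) = (*) (G y \<bullet> y)" by (auto simp: fun_eq_iff mult.commute)
  ultimately have "((\<lambda>s. hom_ext h (s *\<^sub>R y)) has_real_derivative G y \<bullet> y) (at 1)"
    unfolding has_field_derivative_def by simp
  moreover have "((\<lambda>s. s * hom_ext h y) has_real_derivative hom_ext h y) (at 1)"
    by (auto intro!: derivative_eq_intros)
  then have "((\<lambda>s. hom_ext h (s *\<^sub>R y)) has_real_derivative hom_ext h y) (at 1)"
    by (rule has_field_derivative_transform_within_open[of _ _ _ "{0<..}"]) (auto simp: hom_ext_scaleR)
  ultimately show ?thesis by (rule DERIV_unique)
qed

lemma G_normal_component: "norm x = 1 \<Longrightarrow> G x \<bullet> x = h x"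
  using Euler_identity[of x] by (metis hom_ext_sphere norm_zero zero_neq_one)

lemma continuous_on_sphere: "continuous_on (sphere 0 1) h"
proof -
  have "continuous_on (sphere 0 1) (hom_ext h)"
    by (intro continuous_at_imp_continuous_on ballI has_derivative_continuous[OF has_derivative_hom_ext])
       auto
  then show ?thesis by (rule continuous_on_cong[THEN iffD1, rotated 2]) (auto simp: hom_ext_sphere)
qed

text \<open>Along the great circle \<open>\<gamma>\<close> through \<open>x\<close> with velocity \<open>v\<close> we have \<open>\<gamma>'' = -\<bar>v\<bar>\<^sup>2 \<gamma>\<close>,
  which by Euler's identity produces the term \<open>-\<bar>v\<bar>\<^sup>2 h x\<close>.\<close>
lemma has_deriv2_at_0_geodesic:
  assumes x: "norm x = 1" and vx: "v \<bullet> x = 0"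
  shows "has_deriv2_at_0 (\<lambda>t. h (sph_exp x (t *\<^sub>R v))) (G x \<bullet> v) (v \<bullet> (Hs x *v v) - (v \<bullet> v) * h x)"
proof (cases "v = 0")
  case True
  then show ?thesis by (auto simp: has_deriv2_at_0_def sph_exp_def intro!: exI[of _ "\<lambda>_. 0"])
next
  case False
  define a where "a = norm v"
  define w where "w = v /\<^sub>R a"
  define \<gamma> where "\<gamma> t = cos (t * a) *\<^sub>R x + sin (t * a) *\<^sub>R w" for t
  define \<gamma>' where "\<gamma>' t = (- a * sin (t * a)) *\<^sub>R x + (a * cos (t * a)) *\<^sub>R w" for t
  define \<gamma>'' where "\<gamma>'' t = (- a * a * cos (t * a)) *\<^sub>R x + (- a * a * sin (t * a)) *\<^sub>R w" for t
  have "a > 0" using False by (simp add: a_def)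
  have \<gamma>_eq: "sph_exp x (t *\<^sub>R v) = \<gamma> t" for t
    using False by (simp add: sph_exp_scaleR \<gamma>_def a_def w_def)
  have \<gamma>_sphere: "norm (\<gamma> t) = 1" for t
    using norm_sph_exp[OF x, of "t *\<^sub>R v"] vx by (simp add: \<gamma>_eq)
  have \<gamma>_deriv: "(\<gamma> has_derivative (\<lambda>u. u *\<^sub>R \<gamma>' t)) (at t)" for t
    unfolding \<gamma>_def \<gamma>'_def by (rule has_derivative_scaleR_sum) (auto intro!: derivative_eq_intros)
  have \<gamma>'_deriv: "(\<gamma>' has_derivative (\<lambda>u. u *\<^sub>R \<gamma>'' t)) (at t)" for t
    unfolding \<gamma>'_def \<gamma>''_def by (rule has_derivative_scaleR_sum) (auto intro!: derivative_eq_intros)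
  have vv: "v \<bullet> v = a * a" by (simp add: a_def dot_square_norm power2_eq_square)
  have \<gamma>_0: "\<gamma> 0 = x" "\<gamma>' 0 = v" "\<gamma>'' 0 = (- (a * a)) *\<^sub>R x"
    using \<open>a > 0\<close> by (simp_all add: \<gamma>_def \<gamma>'_def \<gamma>''_def w_def)
  define d where "d s = G (\<gamma> s) \<bullet> \<gamma>' s" for s
  have "((\<lambda>t. h (sph_exp x (t *\<^sub>R v))) has_real_derivative d s) (at s)" for s
  proof -
    have "((\<lambda>t. hom_ext h (\<gamma> t)) has_derivative (\<lambda>u. G (\<gamma> s) \<bullet> (u *\<^sub>R \<gamma>' s))) (at s)"
      using \<gamma>_sphere[of s] by (intro has_derivative_compose[OF \<gamma>_deriv has_derivative_hom_ext]) auto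
    moreover have "(\<lambda>u. G (\<gamma> s) \<bullet> (u *\<^sub>R \<gamma>' s)) = (*) (d s)" by (auto simp: fun_eq_iff d_def)
    ultimately show ?thesis
      using \<gamma>_sphere by (simp add: has_field_derivative_def \<gamma>_eq hom_ext_sphere)
  qed
  moreover have "d 0 = G x \<bullet> v" by (simp add: d_def \<gamma>_0)
  moreover have "(d has_real_derivative (v \<bullet> (Hs x *v v) - (v \<bullet> v) * h x)) (at 0)"
  proof -
    have "((\<lambda>t. G (\<gamma> t)) has_derivative (\<lambda>u. Hs (\<gamma> 0) *v (u *\<^sub>R \<gamma>' 0))) (at 0)"
      using \<gamma>_sphere[of 0] by (intro has_derivative_compose[OF \<gamma>_deriv has_derivative_G]) auto
    from has_derivative_inner[OF this \<gamma>'_deriv]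
    have "(d has_derivative (\<lambda>u. G x \<bullet> (u *\<^sub>R \<gamma>'' 0) + (Hs x *v (u *\<^sub>R v)) \<bullet> v)) (at 0)"
      unfolding d_def \<gamma>_0 .
    moreover have "(\<lambda>u. G x \<bullet> (u *\<^sub>R \<gamma>'' 0) + (Hs x *v (u *\<^sub>R v)) \<bullet> v)
        = (*) (v \<bullet> (Hs x *v v) - (v \<bullet> v) * h x)"
      using G_normal_component[OF x] unfolding \<gamma>_0 vv
      by (auto simp: fun_eq_iff matrix_vector_mult_scaleR inner_commute algebra_simps)
    ultimately show ?thesis by (simp add: has_field_derivative_def)
  qed
  ultimately show ?thesis unfolding has_deriv2_at_0_def by auto
qed

lemma cov_quad_eq:
  "norm x = 1 \<Longrightarrow> v \<bullet> x = 0 \<Longrightarrow> cov_quad h x v = v \<bullet> (Hs x *v v) - (v \<bullet> v) * h x"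
  unfolding cov_quad_def by (rule has_deriv2_at_0_deriv2[OF has_deriv2_at_0_geodesic])

lemma cov_hess_eq:
  assumes "norm x = 1" and "u \<bullet> x = 0" and "w \<bullet> x = 0"
  shows "cov_hess h x u w = (u \<bullet> (Hs x *v w) + w \<bullet> (Hs x *v u)) / 2 - (u \<bullet> w) * h x"
proof -
  have "(u + w) \<bullet> x = 0" "(u - w) \<bullet> x = 0" using assms by (auto simp: inner_add_left inner_diff_left)
  note cov_quad_eq[OF assms(1) this(1)] cov_quad_eq[OF assms(1) this(2)]
  then show ?thesis
    unfolding cov_hess_def
    by (simp add: matrix_vector_right_distrib matrix_vector_mult_diff_distrib inner_add_left
        inner_add_right inner_diff_left inner_diff_right inner_commute[of w u] algebra_simps,
        simp add: field_simps)
qed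

text \<open>The term \<open>h \<delta>\<^sub>i\<^sub>j\<close> cancels the curvature term \<open>-(u \<bullet> w) h x\<close> of the covariant
  Hessian.\<close>
lemma frame_det_eq:
  assumes "norm x = 1" and "ortho_frame x e"
  shows "frame_det h x e = det_nat (CARD('n) - 1) (frame_matrix (Hs x) e)"
  unfolding frame_det_def
proof (rule det_nat_cong)
  fix i j assume "i < CARD('n) - 1" "j < CARD('n) - 1"
  then have "e i \<bullet> x = 0" "e j \<bullet> x = 0" "e i \<bullet> e j = (if i = j then 1 else 0)"
    using assms(2) unfolding ortho_frame_def by auto
  then show "cov_hess h x (e i) (e j) + h x * (if i = j then 1 else 0) = frame_matrix (Hs x) e i j"
    using cov_hess_eq[OF assms(1)] by (simp add: frame_matrix_def)
qed

lemma solution_eq_frame: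
  assumes "pos_C2_solution p \<alpha> q f h" and "x \<in> sphere 0 1" and "ortho_frame x e"
  shows "h x powr (1 - p) * g_aq \<alpha> q (G x) * det_nat (CARD('n) - 1) (frame_matrix (Hs x) e) = f x"
proof -
  have "h x powr (1 - p) * g_aq \<alpha> q (grad (hom_ext h) x) * frame_det h x e = f x"
    using assms unfolding pos_C2_solution_def by blast
  moreover have "x \<noteq> 0" using assms(2) by auto
  ultimately show ?thesis using assms frame_det_eq[of x e] grad_hom_ext[of x] by simp
qed

end

section \<open>Ellipticity\<close>

definition tangent_pos_semidef :: "real^'n \<Rightarrow> real^'n^'n \<Rightarrow> bool" where
  "tangent_pos_semidef x M \<longleftrightarrow> (\<forall>u. u \<bullet> x = 0 \<longrightarrow> 0 \<le> u \<bullet> (M *v u))"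

definition tangent_pos_def :: "real^'n \<Rightarrow> real^'n^'n \<Rightarrow> bool" where
  "tangent_pos_def x M \<longleftrightarrow> (\<forall>u. u \<bullet> x = 0 \<longrightarrow> u \<noteq> 0 \<longrightarrow> 0 < u \<bullet> (M *v u))"

definition tangent_proj :: "real^'n \<Rightarrow> real^'n \<Rightarrow> real^'n" where
  "tangent_proj x v = v - (v \<bullet> x) *\<^sub>R x"

lemma tangent_proj_orthogonal: "norm x = 1 \<Longrightarrow> tangent_proj x v \<bullet> x = 0"
  by (simp add: tangent_proj_def inner_diff_left dot_square_norm)

lemma tangent_proj_id: "v \<bullet> x = 0 \<Longrightarrow> tangent_proj x v = v"
  by (simp add: tangent_proj_def)

lemma continuous_on_quadratic_form:
  fixes A :: "'a::topological_space \<Rightarrow> real^'n^'n" and u :: "'a \<Rightarrow> real^'n"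
  assumes "continuous_on X A" and "continuous_on X u"
  shows "continuous_on X (\<lambda>z. u z \<bullet> (A z *v u z))"
  unfolding inner_vec_def matrix_vector_mult_def
  by (simp add: inner_real_def) (intro continuous_intros assms)

lemma tangent_pos_def_imp_semidef: "tangent_pos_def x M \<Longrightarrow> tangent_pos_semidef x M"
  unfolding tangent_pos_def_def tangent_pos_semidef_def by (metis inner_zero_left less_eq_real_def)

lemma tangent_pos_semidef_iff_proj:
  assumes x: "norm x = 1"
  shows "tangent_pos_semidef x M \<longleftrightarrow> (\<forall>v. 0 \<le> tangent_proj x v \<bullet> (M *v tangent_proj x v))"
proof
  assume "tangent_pos_semidef x M"
  then show "\<forall>v. 0 \<le> tangent_proj x v \<bullet> (M *v tangent_proj x v)"
    using tangent_proj_orthogonal[OF x] unfolding tangent_pos_semidef_def by blast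
next
  assume "\<forall>v. 0 \<le> tangent_proj x v \<bullet> (M *v tangent_proj x v)"
  then show "tangent_pos_semidef x M" unfolding tangent_pos_semidef_def by (metis tangent_proj_id)
qed

text \<open>The summand \<open>(v \<bullet> x)\<^sup>2\<close> makes the form positive on all of the unit sphere, so that
  compactness of the sphere can be used.\<close>
lemma tangent_pos_def_iff_proj:
  fixes x :: "real^'n"
  assumes x: "norm x = 1"
  shows "tangent_pos_def x M \<longleftrightarrow>
    (\<forall>v\<in>sphere 0 1. 0 < tangent_proj x v \<bullet> (M *v tangent_proj x v) + (v \<bullet> x)\<^sup>2)"
proof
  assume pos: "tangent_pos_def x M"
  show "\<forall>v\<in>sphere 0 1. 0 < tangent_proj x v \<bullet> (M *v tangent_proj x v) + (v \<bullet> x)\<^sup>2"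
  proof
    fix v :: "real^'n" assume v: "v \<in> sphere 0 1"
    show "0 < tangent_proj x v \<bullet> (M *v tangent_proj x v) + (v \<bullet> x)\<^sup>2"
    proof (cases "tangent_proj x v = 0")
      case True
      then have "v = (v \<bullet> x) *\<^sub>R x" by (simp add: tangent_proj_def)
      then have "v \<bullet> x \<noteq> 0" using v by (metis mem_sphere_0 norm_zero scaleR_zero_left zero_neq_one)
      then show ?thesis using True by simp
    next
      case False
      then show ?thesis
        using pos tangent_proj_orthogonal[OF x] unfolding tangent_pos_def_def by (simp add: add_pos_nonneg)
    qed
  qed
next
  assume pos: "\<forall>v\<in>sphere 0 1. 0 < tangent_proj x v \<bullet> (M *v tangent_proj x v) + (v \<bullet> x)\<^sup>2"
  show "tangent_pos_def x M"
    unfolding tangent_pos_def_def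
  proof (intro allI impI)
    fix u :: "real^'n" assume "u \<bullet> x = 0" and "u \<noteq> 0"
    then have "0 < (u /\<^sub>R norm u) \<bullet> (M *v (u /\<^sub>R norm u))"
      using pos[rule_format, of "u /\<^sub>R norm u"] by (simp add: tangent_proj_id)
    then show "0 < u \<bullet> (M *v u)"
      by (simp add: matrix_vector_mult_scaleR zero_less_mult_iff)
  qed
qed

lemma closedin_tangent_pos_semidef:
  assumes "continuous_on (sphere 0 1) M"
  shows "closedin (top_of_set (sphere 0 1)) {x \<in> sphere 0 1. tangent_pos_semidef x (M x)}"
proof -
  have eq: "{x \<in> sphere 0 1. tangent_pos_semidef x (M x)} = (\<Inter>v\<in>UNIV.
      sphere 0 1 \<inter> (\<lambda>x. tangent_proj x v \<bullet> (M x *v tangent_proj x v)) -` {0..})"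
    by (auto simp: tangent_pos_semidef_iff_proj)
  have "continuous_on (sphere 0 1) (\<lambda>x. tangent_proj x v \<bullet> (M x *v tangent_proj x v))" for v
    unfolding tangent_proj_def by (intro continuous_on_quadratic_form assms continuous_intros)
  then show ?thesis unfolding eq by (intro closedin_INT continuous_closedin_preimage) auto
qed

lemma openin_tangent_pos_def:
  assumes cont: "continuous_on (sphere 0 1) M"
  shows "openin (top_of_set (sphere 0 1)) {x \<in> sphere 0 1. tangent_pos_def x (M x)}"
proof -
  let ?S = "sphere (0::real^'n) 1"
  define N where "N x v = tangent_proj x v \<bullet> (M x *v tangent_proj x v) + (v \<bullet> x)\<^sup>2" for x v
  define C where "C = {z \<in> ?S \<times> ?S. N (fst z) (snd z) \<le> 0}"
  have "continuous_on (?S \<times> ?S) (\<lambda>z. M (fst z))"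
    by (rule continuous_on_compose2[OF cont]) (auto intro!: continuous_intros)
  then have "closed C"
    unfolding C_def N_def tangent_proj_def
    by (intro continuous_on_closed_Collect_le continuous_intros continuous_on_quadratic_form closed_Times)
       auto
  moreover have "C = (?S \<times> ?S) \<inter> C" by (auto simp: C_def)
  ultimately have "compact C"
    by (metis compact_Int_closed compact_Times compact_sphere)
  then have "closed (fst ` C)" by (intro compact_imp_closed compact_continuous_image continuous_intros)
  have "x \<in> fst ` C \<longleftrightarrow> x \<in> ?S \<and> (\<exists>v\<in>?S. N x v \<le> 0)" for x
    by (force simp: C_def)
  moreover have "tangent_pos_def x (M x) \<longleftrightarrow> \<not> (\<exists>v\<in>?S. N x v \<le> 0)" if "x \<in> ?S" for x
    using that by (auto simp: tangent_pos_def_iff_proj N_def not_le)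
  ultimately have "{x \<in> ?S. tangent_pos_def x (M x)} = ?S \<inter> - fst ` C" by blast
  then show ?thesis using \<open>closed (fst ` C)\<close> by auto
qed

lemma nonneg_quadratic_imp_linear_coeff_0:
  fixes b c :: real
  assumes "\<And>s. 0 \<le> s * b + s\<^sup>2 * c"
  shows "b = 0"
proof (rule ccontr)
  assume "b \<noteq> 0"
  define K where "K = \<bar>c\<bar> + 1"
  define s where "s = - b / (2 * K)"
  have K: "K > 0" "c \<le> K" by (auto simp: K_def)
  have "s * b + s\<^sup>2 * c \<le> s * b + s\<^sup>2 * K" using K by (simp add: mult_left_mono)
  also have "\<dots> = - b\<^sup>2 / (4 * K)" using K by (simp add: s_def power2_eq_square field_simps)
  also have "\<dots> < 0" using K \<open>b \<noteq> 0\<close> by (simp add: field_simps)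
  finally show False using assms[of s] by simp
qed

lemma tangent_pos_semidef_null:
  assumes psd: "tangent_pos_semidef x M" and "w \<bullet> x = 0" and "w \<bullet> (M *v w) = 0" and "z \<bullet> x = 0"
  shows "z \<bullet> (M *v w) + w \<bullet> (M *v z) = 0"
proof (rule nonneg_quadratic_imp_linear_coeff_0)
  fix s :: real
  have "(w + s *\<^sub>R z) \<bullet> x = 0" using assms by (simp add: inner_add_left)
  then have "0 \<le> (w + s *\<^sub>R z) \<bullet> (M *v (w + s *\<^sub>R z))" using psd by (simp add: tangent_pos_semidef_def)
  also have "\<dots> = s * (z \<bullet> (M *v w) + w \<bullet> (M *v z)) + s\<^sup>2 * (z \<bullet> (M *v z))"
    using assms(3) by (simp add: matrix_vector_right_distrib matrix_vector_mult_scaleR inner_add_left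
        inner_add_right power2_eq_square algebra_simps)
  finally show "0 \<le> s * (z \<bullet> (M *v w) + w \<bullet> (M *v z)) + s\<^sup>2 * (z \<bullet> (M *v z))" .
qed

text \<open>A null direction \<open>w\<close> of a semidefinite form is in its kernel, so a frame starting with \<open>w\<close>
  gives a zero column.\<close>
lemma tangent_pos_def_if_semidef_nonsingular:
  fixes x :: "real^'n"
  assumes x: "norm x = 1" and psd: "tangent_pos_semidef x M"
    and nonsingular: "\<And>e. ortho_frame x e \<Longrightarrow> det_nat (CARD('n) - 1) (frame_matrix M e) \<noteq> 0"
  shows "tangent_pos_def x M"
  unfolding tangent_pos_def_def
proof (intro allI impI)
  fix u :: "real^'n" assume "u \<bullet> x = 0" and "u \<noteq> 0"
  show "0 < u \<bullet> (M *v u)"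
  proof (rule ccontr)
    assume "\<not> 0 < u \<bullet> (M *v u)"
    then have "u \<bullet> (M *v u) = 0"
      using psd \<open>u \<bullet> x = 0\<close> unfolding tangent_pos_semidef_def by (metis less_eq_real_def)
    define w where "w = u /\<^sub>R norm u"
    have w: "norm w = 1" "w \<bullet> x = 0" "w \<bullet> (M *v w) = 0"
      using \<open>u \<noteq> 0\<close> \<open>u \<bullet> x = 0\<close> \<open>u \<bullet> (M *v u) = 0\<close> by (auto simp: w_def matrix_vector_mult_scaleR)
    obtain e where e: "ortho_frame x e" "e 0 = w" "0 < CARD('n) - 1"
      using ortho_frame_exists_first[OF x w(1,2)] by blast
    have "frame_matrix M e i 0 = 0" if "i < CARD('n) - 1" for i
      using tangent_pos_semidef_null[OF psd w(2,3)] e that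
      by (simp add: frame_matrix_def ortho_frame_def)
    then have "det_nat (CARD('n) - 1) (frame_matrix M e) = 0"
      by (rule det_nat_zero_column[OF e(3)])
    then show False using nonsingular[OF e(1)] by simp
  qed
qed

text \<open>Positivity propagates by connectedness of the sphere: the set where it holds is open, and
  it is closed because its closure is contained in the semidefinite set, where nonsingularity
  forces definiteness.\<close>
lemma tangent_pos_def_everywhere:
  fixes M :: "real^'n \<Rightarrow> real^'n^'n"
  assumes cont: "continuous_on (sphere 0 1) M"
    and nonsingular: "\<And>x e. x \<in> sphere 0 1 \<Longrightarrow> ortho_frame x e \<Longrightarrow>
      det_nat (CARD('n) - 1) (frame_matrix (M x) e) \<noteq> 0"
    and x1: "x1 \<in> sphere 0 1" "tangent_pos_def x1 (M x1)"
    and x: "x \<in> sphere 0 1"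
  shows "tangent_pos_def x (M x)"
  unfolding tangent_pos_def_def
proof (intro allI impI)
  fix u :: "real^'n" assume "u \<bullet> x = 0" and "u \<noteq> 0"
  let ?S = "sphere (0::real^'n) 1"
  let ?U = "{x \<in> ?S. tangent_pos_def x (M x)}"
  obtain e where "0 < CARD('n) - 1"
    using ortho_frame_exists_first[of x "u /\<^sub>R norm u"] x \<open>u \<bullet> x = 0\<close> \<open>u \<noteq> 0\<close> by auto
  then have "connected ?S" by (intro connected_sphere) simp
  moreover have "?U = {x \<in> ?S. tangent_pos_semidef x (M x)}"
    using nonsingular
    by (auto intro: tangent_pos_def_imp_semidef intro!: tangent_pos_def_if_semidef_nonsingular)
  then have "closedin (top_of_set ?S) ?U" using closedin_tangent_pos_semidef[OF cont] by simp
  ultimately have "?U = ?S"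
    using openin_tangent_pos_def[OF cont] x1 unfolding connected_clopen by blast
  then show "0 < u \<bullet> (M x *v u)"
    using x \<open>u \<bullet> x = 0\<close> \<open>u \<noteq> 0\<close> unfolding tangent_pos_def_def by blast
qed

lemma det_frame_matrix_mono:
  fixes x :: "real^'n"
  assumes e: "ortho_frame x e" and pos: "tangent_pos_def x M1"
    and le: "\<And>v. v \<bullet> x = 0 \<Longrightarrow> v \<bullet> (M1 *v v) \<le> v \<bullet> (M2 *v v)"
  shows "0 < det_nat (CARD('n) - 1) (frame_matrix M1 e)"
    and "det_nat (CARD('n) - 1) (frame_matrix M1 e) \<le> det_nat (CARD('n) - 1) (frame_matrix M2 e)"
proof -
  let ?m = "CARD('n) - 1"
  let ?v = "\<lambda>c. \<Sum>i<?m. c i *\<^sub>R e i"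
  have "0 < quad_form ?m (frame_matrix M1 e) c" if nonzero: "\<exists>i<?m. c i \<noteq> 0" for c
  proof -
    obtain k where "k < ?m" "c k \<noteq> 0" using nonzero by blast
    then have "?v c \<noteq> 0" using ortho_frame_combination(2)[OF e, of k c] by auto
    then show ?thesis
      using pos ortho_frame_combination(1)[OF e] unfolding quad_form_frame_matrix tangent_pos_def_def
      by blast
  qed
  moreover have "quad_form ?m (frame_matrix M1 e) c \<le> quad_form ?m (frame_matrix M2 e) c" for c
    unfolding quad_form_frame_matrix using le ortho_frame_combination(1)[OF e] by blast
  ultimately show "0 < det_nat ?m (frame_matrix M1 e)"
    and "det_nat ?m (frame_matrix M1 e) \<le> det_nat ?m (frame_matrix M2 e)"
    using det_nat_mono_pos_def[of ?m "frame_matrix M1 e" "frame_matrix M2 e"] frame_matrix_commute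
    by blast+
qed

context hom_C2
begin

text \<open>At a minimum point of \<open>h\<close> the tangential Hessian of the extension dominates
  \<open>h > 0\<close>; nonsingularity propagates this to the whole sphere.\<close>
lemma tangent_pos_def_Hess:
  assumes pos: "\<And>x. x \<in> sphere 0 1 \<Longrightarrow> h x > 0"
    and nonsingular: "\<And>x e. x \<in> sphere 0 1 \<Longrightarrow> ortho_frame x e \<Longrightarrow>
      det_nat (CARD('n) - 1) (frame_matrix (Hs x) e) \<noteq> 0"
    and x: "x \<in> sphere 0 1"
  shows "tangent_pos_def x (Hs x)"
proof -
  obtain xm where xm: "xm \<in> sphere 0 1" "\<And>y. y \<in> sphere 0 1 \<Longrightarrow> h xm \<le> h y"
    using continuous_attains_inf[OF compact_sphere _ continuous_on_sphere] x by blast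
  have "tangent_pos_def xm (Hs xm)"
    unfolding tangent_pos_def_def
  proof (intro allI impI)
    fix u assume "u \<bullet> xm = 0" "u \<noteq> 0"
    have "has_deriv2_at_0 (\<lambda>t. h (sph_exp xm (t *\<^sub>R u))) (G xm \<bullet> u) (u \<bullet> (Hs xm *v u) - (u \<bullet> u) * h xm)"
      using xm(1) \<open>u \<bullet> xm = 0\<close> by (intro has_deriv2_at_0_geodesic) auto
    moreover have "h (sph_exp xm (0 *\<^sub>R u)) \<le> h (sph_exp xm (t *\<^sub>R u))" for t
      using xm norm_sph_exp[of xm "t *\<^sub>R u"] \<open>u \<bullet> xm = 0\<close> by simp
    ultimately have "(u \<bullet> u) * h xm \<le> u \<bullet> (Hs xm *v u)"
      by (auto dest: has_deriv2_at_0_min)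
    moreover have "0 < (u \<bullet> u) * h xm" using \<open>u \<noteq> 0\<close> pos[OF xm(1)] by simp
    ultimately show "0 < u \<bullet> (Hs xm *v u)" by linarith
  qed
  moreover have "continuous_on (sphere 0 1) Hs"
    using continuous_on_subset[OF continuous_on_Hs] by auto
  ultimately show ?thesis
    using tangent_pos_def_everywhere[of Hs, OF _ nonsingular xm(1) _ x] by blast
qed

end

section \<open>Comparison at a touching point\<close>

lemma touching_conditions:
  fixes x0 :: "real^'n"
  assumes "hom_C2 h1 G1 Hs1" and "hom_C2 h2 G2 Hs2" and x0: "norm x0 = 1"
    and below: "\<And>y. y \<in> sphere 0 1 \<Longrightarrow> h1 y \<le> l * h2 y" and touch: "h1 x0 = l * h2 x0"
  shows "G1 x0 = l *\<^sub>R G2 x0"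
    and "\<And>v. v \<bullet> x0 = 0 \<Longrightarrow> v \<bullet> (Hs1 x0 *v v) \<le> v \<bullet> ((l *\<^sub>R Hs2 x0) *v v)"
proof -
  interpret h1: hom_C2 h1 G1 Hs1 by fact
  interpret h2: hom_C2 h2 G2 Hs2 by fact
  have tangential: "G1 x0 \<bullet> v = l * (G2 x0 \<bullet> v) \<and> v \<bullet> (Hs1 x0 *v v) \<le> l * (v \<bullet> (Hs2 x0 *v v))"
    if "v \<bullet> x0 = 0" for v
  proof -
    let ?\<phi> = "\<lambda>t. h1 (sph_exp x0 (t *\<^sub>R v)) - l * h2 (sph_exp x0 (t *\<^sub>R v))"
    have "has_deriv2_at_0 ?\<phi> (G1 x0 \<bullet> v - l * (G2 x0 \<bullet> v))
      ((v \<bullet> (Hs1 x0 *v v) - (v \<bullet> v) * h1 x0) - l * (v \<bullet> (Hs2 x0 *v v) - (v \<bullet> v) * h2 x0))"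
      using x0 that
      by (intro has_deriv2_at_0_diff_cmult h1.has_deriv2_at_0_geodesic h2.has_deriv2_at_0_geodesic)
    moreover have "?\<phi> t \<le> ?\<phi> 0" for t
      using below[of "sph_exp x0 (t *\<^sub>R v)"] norm_sph_exp[OF x0, of "t *\<^sub>R v"] that touch
      by simp
    ultimately show ?thesis
      using touch by (auto dest: has_deriv2_at_0_max simp: algebra_simps)
  qed
  define w where "w = G1 x0 - l *\<^sub>R G2 x0"
  have "w \<bullet> x0 = 0"
    using h1.G_normal_component[OF x0] h2.G_normal_component[OF x0] touch
    by (simp add: w_def inner_diff_left)
  then have "w \<bullet> w = 0" using tangential[of w] by (simp add: w_def inner_diff_left)
  then show "G1 x0 = l *\<^sub>R G2 x0" by (simp add: w_def)
  show "v \<bullet> (Hs1 x0 *v v) \<le> v \<bullet> ((l *\<^sub>R Hs2 x0) *v v)" if "v \<bullet> x0 = 0" for v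
    using tangential[OF that] by (simp add: scaleR_matrix_vector_assoc[symmetric])
qed

lemma g_unnorm_nonneg: "0 \<le> g_unnorm \<alpha> q y"
  by (simp add: g_unnorm_def)

text \<open>The bound on \<open>q\<close> is exactly what makes the exponent \<open>1/q - n/\<alpha> - 1\<close> positive for
  \<open>q > 0\<close>; for \<open>q < 0\<close> both base and exponent change their monotonicity.\<close>
lemma g_unnorm_strict_antimono:
  fixes y1 y2 :: "real^'n"
  assumes \<alpha>: "\<alpha> > 0" and q: "q < \<alpha> / (real CARD('n) + \<alpha>)"
    and less: "norm y1 < norm y2" and pos: "g_unnorm \<alpha> q y2 > 0"
  shows "g_unnorm \<alpha> q y2 < g_unnorm \<alpha> q y1"
proof -
  define e where "e = 1 / q - real CARD('n) / \<alpha> - 1"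
  define b where "b y = 1 - q / \<alpha> * norm y powr \<alpha>" for y :: "real^'n"
  have g: "g_unnorm \<alpha> q y = max 0 (b y) powr e" if "q \<noteq> 0" for y
    using that by (simp add: g_unnorm_def b_def e_def)
  have powr_less: "norm y1 powr \<alpha> < norm y2 powr \<alpha>" using \<alpha> less by (intro powr_less_mono2) auto
  consider "q = 0" | "q > 0" | "q < 0" by linarith
  then show ?thesis
  proof cases
    case 1
    then show ?thesis using powr_less \<alpha> by (simp add: g_unnorm_def divide_strict_right_mono)
  next
    case 2
    have "q * (real CARD('n) + \<alpha>) < \<alpha>" using q \<alpha> by (simp add: pos_less_divide_eq add_pos_nonneg)
    then have "e > 0" using 2 \<alpha> by (simp add: e_def field_simps)
    have "q * norm y1 powr \<alpha> < q * norm y2 powr \<alpha>" by (rule mult_strict_left_mono[OF powr_less 2])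
    then have "b y2 < b y1" using \<alpha> by (simp add: b_def divide_strict_right_mono)
    moreover have "b y2 > 0" using pos g 2 \<open>e > 0\<close> by (cases "b y2 > 0") auto
    ultimately show ?thesis using g 2 \<open>e > 0\<close> by (simp add: powr_less_mono2)
  next
    case 3
    have "1 / q < 0" "0 \<le> real CARD('n) / \<alpha>" using 3 \<alpha> by simp_all
    then have "e < 0" unfolding e_def by linarith
    have "q * norm y2 powr \<alpha> < q * norm y1 powr \<alpha>" by (rule mult_strict_left_mono_neg[OF powr_less 3])
    then have "b y1 < b y2" using \<alpha> by (simp add: b_def divide_strict_right_mono)
    moreover have "q / \<alpha> * norm y1 powr \<alpha> \<le> 0"
      using 3 \<alpha> by (intro mult_nonpos_nonneg) (simp_all add: divide_neg_pos less_imp_le)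
    then have "1 \<le> b y1" by (simp add: b_def)
    ultimately show ?thesis
      using g 3 powr_less_mono2_neg[OF \<open>e < 0\<close> _ \<open>b y1 < b y2\<close>] by simp
  qed
qed

text \<open>The homogeneity count behind the condition \<open>p \<ge> n\<close>: replacing \<open>h\<close> by \<open>l h\<close> multiplies
  \<open>h\<^sup>1\<^sup>-\<^sup>p\<close> by \<open>l\<^sup>1\<^sup>-\<^sup>p\<close> and the determinant by at most \<open>l\<^sup>n\<^sup>-\<^sup>1\<close>.\<close>
lemma scaled_equation_le:
  fixes l H p g1 g2 D1 D2 F Z :: real and m :: nat
  assumes l: "1 < l" and p: "real m + 1 \<le> p" and H: "0 < H" and F: "0 < F"
    and D: "0 < D1" "D1 \<le> l ^ m * D2" and nonneg: "0 \<le> g1" "0 \<le> Z"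
    and eq1: "(l * H) powr (1 - p) * (g1 / Z) * D1 = F" and eq2: "H powr (1 - p) * (g2 / Z) * D2 = F"
  shows "0 < g1" and "g2 \<le> g1"
proof -
  have "0 < ((l * H) powr (1 - p) * D1) * (g1 / Z)" using eq1 F by (simp add: mult_ac)
  moreover have "0 < (l * H) powr (1 - p) * D1" using l H D(1) by simp
  ultimately have "0 < g1 / Z" by (rule zero_less_mult_pos)
  then have "0 < g1" and "0 < Z" using nonneg by (auto simp: zero_less_divide_iff)
  then show "0 < g1" by simp
  have "0 < D2" using D l by (smt (verit) zero_less_mult_iff zero_less_power)
  have "H powr (1 - p) / Z * (g2 * D2) = H powr (1 - p) / Z * (l powr (1 - p) * g1 * D1)"
    using eq1 eq2 l H by (simp add: powr_mult mult_ac)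
  then have "g2 * D2 = l powr (1 - p) * g1 * D1" using H \<open>0 < Z\<close> by simp
  also have "\<dots> \<le> l powr (1 - p) * g1 * (l ^ m * D2)"
    using D \<open>0 < g1\<close> l by (intro mult_left_mono) auto
  also have "\<dots> = l powr (1 - p + real m) * g1 * D2"
    using l by (simp add: powr_add powr_realpow)
  also have "\<dots> \<le> 1 * g1 * D2"
    using powr_mono[of "1 - p + real m" 0 l] l p \<open>0 < g1\<close> \<open>0 < D2\<close> by (intro mult_right_mono) auto
  finally show "g2 \<le> g1" using \<open>0 < D2\<close> by simp
qed

lemma pos_C2_solution_touching_le_1:
  fixes h1 h2 f :: "real^'n \<Rightarrow> real" and p \<alpha> q :: real
  assumes p: "p \<ge> real CARD('n)" and \<alpha>: "\<alpha> > 0" and q: "q < \<alpha> / (real CARD('n) + \<alpha>)"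
    and f: "\<forall>x\<in>sphere 0 1. f x > 0"
    and sol1: "pos_C2_solution p \<alpha> q f h1" and sol2: "pos_C2_solution p \<alpha> q f h2"
    and x0: "x0 \<in> sphere 0 1"
    and below: "\<And>y. y \<in> sphere 0 1 \<Longrightarrow> h1 y \<le> l * h2 y" and touch: "h1 x0 = l * h2 x0"
  shows "l \<le> 1"
proof (rule ccontr)
  assume "\<not> l \<le> 1"
  then have "1 < l" by simp
  let ?m = "CARD('n) - 1"
  let ?Z = "\<integral>z. g_unnorm \<alpha> q (z :: real^'n) \<partial>lborel"
  obtain G1 Hs1 G2 Hs2 where "hom_C2 h1 G1 Hs1" "hom_C2 h2 G2 Hs2"
    using pos_C2_solution_hom_C2[OF sol1] pos_C2_solution_hom_C2[OF sol2] by metis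
  interpret h1: hom_C2 h1 G1 Hs1 by fact
  interpret h2: hom_C2 h2 G2 Hs2 by fact
  have "norm x0 = 1" using x0 by simp
  note touching = touching_conditions[OF h1.hom_C2_axioms h2.hom_C2_axioms this below touch]
  have "tangent_pos_def x0 (Hs1 x0)"
    using h1.solution_eq_frame[OF sol1] f pos_C2_solution_pos[OF sol1] x0
    by (intro h1.tangent_pos_def_Hess) fastforce+
  obtain e where e: "ortho_frame x0 e" using ortho_frame_exists \<open>norm x0 = 1\<close> by blast
  have "0 < det_nat ?m (frame_matrix (Hs1 x0) e)"
    and "det_nat ?m (frame_matrix (Hs1 x0) e) \<le> l ^ ?m * det_nat ?m (frame_matrix (Hs2 x0) e)"
    using det_frame_matrix_mono[OF e \<open>tangent_pos_def x0 (Hs1 x0)\<close> touching(2)]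
    by (simp_all add: frame_matrix_scaleR det_nat_cmult)
  moreover have "(l * h2 x0) powr (1 - p) * (g_unnorm \<alpha> q (G1 x0) / ?Z) *
      det_nat ?m (frame_matrix (Hs1 x0) e) = f x0"
    using h1.solution_eq_frame[OF sol1 x0 e] by (simp only: touch g_aq_def)
  moreover have "h2 x0 powr (1 - p) * (g_unnorm \<alpha> q (G2 x0) / ?Z) *
      det_nat ?m (frame_matrix (Hs2 x0) e) = f x0"
    using h2.solution_eq_frame[OF sol2 x0 e] by (simp only: g_aq_def)
  moreover have "real ?m + 1 \<le> p" using p by (simp add: of_nat_diff)
  moreover have "0 \<le> ?Z" by (rule integral_nonneg_AE) (simp add: g_unnorm_nonneg)
  ultimately have "0 < g_unnorm \<alpha> q (G1 x0)" and "g_unnorm \<alpha> q (G2 x0) \<le> g_unnorm \<alpha> q (G1 x0)"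
    using scaled_equation_le[OF \<open>1 < l\<close> _ pos_C2_solution_pos[OF sol2 x0] f[rule_format, OF x0] _ _
        g_unnorm_nonneg] by blast+
  moreover have "norm (G2 x0) < norm (G1 x0)"
  proof -
    have "G2 x0 \<noteq> 0"
      using h2.G_normal_component[OF \<open>norm x0 = 1\<close>] pos_C2_solution_pos[OF sol2 x0] by auto
    then show ?thesis using touching(1) \<open>1 < l\<close> by simp
  qed
  ultimately show False using g_unnorm_strict_antimono[OF \<alpha> q] by fastforce
qed

lemma pos_C2_solution_le:
  fixes h1 h2 f :: "real^'n \<Rightarrow> real" and p \<alpha> q :: real
  assumes "p \<ge> real CARD('n)" and "\<alpha> > 0" and "q < \<alpha> / (real CARD('n) + \<alpha>)"
    and "\<forall>x\<in>sphere 0 1. f x > 0"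
    and sol1: "pos_C2_solution p \<alpha> q f h1" and sol2: "pos_C2_solution p \<alpha> q f h2"
    and x: "x \<in> sphere 0 1"
  shows "h1 x \<le> h2 x"
proof -
  obtain G1 Hs1 G2 Hs2 where "hom_C2 h1 G1 Hs1" "hom_C2 h2 G2 Hs2"
    using pos_C2_solution_hom_C2[OF sol1] pos_C2_solution_hom_C2[OF sol2] by metis
  moreover have "\<forall>y\<in>sphere 0 1. h2 y \<noteq> 0" using pos_C2_solution_pos[OF sol2] by force
  ultimately have "continuous_on (sphere 0 1) (\<lambda>x. h1 x / h2 x)"
    by (intro continuous_on_divide hom_C2.continuous_on_sphere)
  then obtain x0 where x0: "x0 \<in> sphere 0 1" and max: "\<And>y. y \<in> sphere 0 1 \<Longrightarrow> h1 y / h2 y \<le> h1 x0 / h2 x0"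
    using continuous_attains_sup[OF compact_sphere] x by blast
  define l where "l = h1 x0 / h2 x0"
  have below: "h1 y \<le> l * h2 y" if "y \<in> sphere 0 1" for y
    using max[OF that] pos_C2_solution_pos[OF sol2 that] by (simp add: l_def pos_divide_le_eq mult.commute)
  moreover have "h1 x0 = l * h2 x0" using pos_C2_solution_pos[OF sol2 x0] by (simp add: l_def)
  ultimately have "l \<le> 1" by (rule pos_C2_solution_touching_le_1[OF assms(1-6) x0])
  then have "l * h2 x \<le> 1 * h2 x"
    using pos_C2_solution_pos[OF sol2 x] by (intro mult_right_mono) auto
  then show ?thesis using below[OF x] by simp
qed

theorem theorem5p5:
  fixes h1 h2 f :: "real^'n \<Rightarrow> real" and p \<alpha> q :: real
  assumes "p \<ge> real CARD('n)" and "\<alpha> > 0" and "q < \<alpha> / (real CARD('n) + \<alpha>)"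
    and "\<forall>x\<in>sphere 0 1. f x > 0"
    and "pos_C2_solution p \<alpha> q f h1" and "pos_C2_solution p \<alpha> q f h2"
  shows "\<forall>x\<in>sphere 0 1. h1 x = h2 x"
  using pos_C2_solution_le[OF assms(1-4) assms(5,6)] pos_C2_solution_le[OF assms(1-4) assms(6,5)]
  by (auto intro: order_antisym)

end
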